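(* Let $V$ be an $n$-dimensional vector space over a field $\mathbb{F}$ with an alternating bilinear form $\mathsf{s}$ of maximal rank, and let $\Gamma=\Gamma(V)$. For every hyperbolic basis $\{e_i,f_j\mid 1\le i\le r+d,\ 1\le j\le r\}$ of $V$ (where $2r=\mathrm{rank}(V)$, $d=\dim\mathrm{Rad}(V)$), setting $h_{2i-1}=e_i$ ($1\le i\le r+d$), $h_{2j}=f_j$ ($1\le j\le r$) and $C_l=\langle h_1,\dots,h_l\rangle$, the collection $\{C_l\}_{l=1}^{n-1}$ is a chamber of $\Gamma$. Conversely, every chamber of $\Gamma$ arises in this way from some (not necessarily unique) hyperbolic basis of $V$.
   Context: $U^\perp=\{v\in V:\mathsf{s}(u,v)=0\ \forall u\in U\}$, $\mathrm{Rad}(U)=U\cap U^\perp$, $\mathrm{rank}(U)=\dim U-\dim\mathrm{Rad}(U)$; maximal rank means $\dim\mathrm{Rad}(V)\le1$. A hyperbolic basis of $V$ is a basis $\{e_i,f_j\mid 1\le i\le r+d, 1\le j\le r\}$ with $\mathsf{s}(e_i,e_j)=\mathsf{s}(f_i,f_j)=0$ and $\mathsf{s}(e_i,f_j)=\delta_{ij}$ for $1\le i,j\le r$, and $\{e_{r+i}\}_{1\le i\le d}$ a basis of $\mathrm{Rad}(V)$. $\Gamma(V)$: for $i\in I=\{1,\dots,n-1\}$ the objects of type $i$ are the $i$-dimensional subspaces $U$ with $U\cap\mathrm{Rad}(V)=0$ and $\dim\mathrm{Rad}(U)\le1$; $X,Y$ are incident iff $X=Y$ or $X\subseteq Y$ with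 $X\cap\mathrm{Rad}(Y)=0$ or vice versa. A flag is a set of pairwise incident objects; a chamber is a flag containing one object of each type in $I$. *)

theory Defs
  imports Complex_Main
begin

text \<open>Alternating bilinear forms on a vector space given by a scalar multiplication
  scale (a vector_space locale instance); the whole space V is UNIV.\<close>

definition alt_bilinear :: "('f::field \<Rightarrow> 'v::ab_group_add \<Rightarrow> 'v) \<Rightarrow> ('v \<Rightarrow> 'v \<Rightarrow> 'f) \<Rightarrow> bool" where
  "alt_bilinear scale s \<longleftrightarrow>
     (\<forall>x y z. s (x + y) z = s x z + s y z) \<and>
     (\<forall>x y z. s x (y + z) = s x y + s x z) \<and>
     (\<forall>c x y. s (scale c x) y = c * s x y) \<and>
     (\<forall>c x y. s x (scale c y) = c * s x y) \<and>
     (\<forall>x. s x x = 0)"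

definition orth :: "('v \<Rightarrow> 'v \<Rightarrow> 'f::zero) \<Rightarrow> 'v set \<Rightarrow> 'v set" where
  "orth s U = {v. \<forall>u\<in>U. s u v = 0}"

definition Rad :: "('v \<Rightarrow> 'v \<Rightarrow> 'f::zero) \<Rightarrow> 'v set \<Rightarrow> 'v set" where
  "Rad s U = U \<inter> orth s U"

definition rank :: "('f::field \<Rightarrow> 'v::ab_group_add \<Rightarrow> 'v) \<Rightarrow> ('v \<Rightarrow> 'v \<Rightarrow> 'f) \<Rightarrow> 'v set \<Rightarrow> nat" where
  "rank scale s U = vector_space.dim scale U - vector_space.dim scale (Rad s U)"

definition max_rank :: "('f::field \<Rightarrow> 'v::ab_group_add \<Rightarrow> 'v) \<Rightarrow> ('v \<Rightarrow> 'v \<Rightarrow> 'f) \<Rightarrow> bool" where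
  "max_rank scale s \<longleftrightarrow> vector_space.dim scale (Rad s UNIV) \<le> 1"

definition hseq :: "(nat \<Rightarrow> 'v) \<Rightarrow> (nat \<Rightarrow> 'v) \<Rightarrow> nat \<Rightarrow> 'v" where
  "hseq e f l = (if odd l then e ((l + 1) div 2) else f (l div 2))"

definition hyperbolic_basis ::
  "('f::field \<Rightarrow> 'v::ab_group_add \<Rightarrow> 'v) \<Rightarrow> ('v \<Rightarrow> 'v \<Rightarrow> 'f) \<Rightarrow> nat \<Rightarrow> nat \<Rightarrow> (nat \<Rightarrow> 'v) \<Rightarrow> (nat \<Rightarrow> 'v) \<Rightarrow> bool" where
  "hyperbolic_basis scale s r d e f \<longleftrightarrow>
     2 * r = rank scale s UNIV \<and> d = vector_space.dim scale (Rad s UNIV) \<and>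
     inj_on (hseq e f) {1..2*r+d} \<and>
     module.independent scale (hseq e f ` {1..2*r+d}) \<and>
     module.span scale (hseq e f ` {1..2*r+d}) = UNIV \<and>
     (\<forall>i\<in>{1..r}. \<forall>j\<in>{1..r}. s (e i) (e j) = 0 \<and> s (f i) (f j) = 0 \<and>
        s (e i) (f j) = (if i = j then 1 else 0)) \<and>
     module.independent scale (e ` {r+1..r+d}) \<and>
     module.span scale (e ` {r+1..r+d}) = Rad s UNIV"

definition hflag :: "('f::field \<Rightarrow> 'v::ab_group_add \<Rightarrow> 'v) \<Rightarrow> (nat \<Rightarrow> 'v) \<Rightarrow> (nat \<Rightarrow> 'v) \<Rightarrow> nat \<Rightarrow> 'v set" where
  "hflag scale e f l = module.span scale (hseq e f ` {1..l})"

definition gobj :: "('f::field \<Rightarrow> 'v::ab_group_add \<Rightarrow> 'v) \<Rightarrow> ('v \<Rightarrow> 'v \<Rightarrow> 'f) \<Rightarrow> nat \<Rightarrow> 'v set \<Rightarrow> bool" where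
  "gobj scale s i U \<longleftrightarrow> module.subspace scale U \<and> vector_space.dim scale U = i \<and>
     U \<inter> Rad s UNIV = {0} \<and> vector_space.dim scale (Rad s U) \<le> 1"

definition incident :: "('v::zero \<Rightarrow> 'v \<Rightarrow> 'f::zero) \<Rightarrow> 'v set \<Rightarrow> 'v set \<Rightarrow> bool" where
  "incident s X Y \<longleftrightarrow> X = Y \<or> (X \<subseteq> Y \<and> X \<inter> Rad s Y = {0}) \<or> (Y \<subseteq> X \<and> Y \<inter> Rad s X = {0})"

definition chamber :: "('f::field \<Rightarrow> 'v::ab_group_add \<Rightarrow> 'v) \<Rightarrow> ('v \<Rightarrow> 'v \<Rightarrow> 'f) \<Rightarrow> nat \<Rightarrow> 'v set set \<Rightarrow> bool" where
  "chamber scale s n C \<longleftrightarrow>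
     (\<forall>X\<in>C. \<exists>i\<in>{1..n-1}. gobj scale s i X) \<and>
     (\<forall>X\<in>C. \<forall>Y\<in>C. incident s X Y) \<and>
     (\<forall>i\<in>{1..n-1}. \<exists>X\<in>C. gobj scale s i X)"

end

(* In a hyperbolic basis, pairing with the partner h (partner a) of h a (e_i for f_i and vice
   versa) reads off the coefficient of h a. Hence the radical of C_l = <h_1, ..., h_l> is spanned
   by h_l for odd l and is zero for even l, which gives C_l \<inter> Rad V = 0, dim Rad C_l \<le> 1 and
   C_k \<inter> Rad C_m = 0 for k < m.

   Conversely, a chamber is a complete flag 0 = Y_0 < Y_1 < ... < Y_n = V with Y_i \<inter> Rad Y_j = 0
   for i < j, and a hyperbolic basis adapted to it is built one vector at a time. If h_1, ..., h_2k
   is already a hyperbolic basis of Y_2k, then Y_2k is nondegenerate, so every vector is the sum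
   of a vector of Y_2k and one orthogonal to Y_2k. Removing the Y_2k-part of a vector of
   Y_2k+1 - Y_2k gives a nonzero h_2k+1 in Rad Y_2k+1; since h_2k+1 \<notin> Rad Y_2k+2, removing the
   Y_2k-part of a vector of Y_2k+2 not orthogonal to h_2k+1 gives, after scaling, its partner
   h_2k+2. For odd n, maximal rank makes h_n span Rad V. *)

theory Submission
  imports Defs
begin

locale alternating_form = finite_dimensional_vector_space scale Basis
  for scale :: "'f::field \<Rightarrow> 'v::ab_group_add \<Rightarrow> 'v" and Basis :: "'v set" +
  fixes s :: "'v \<Rightarrow> 'v \<Rightarrow> 'f"
  assumes alt_bilinear: "alt_bilinear scale s"
begin

lemma form_add_left: "s (x + y) z = s x z + s y z"
  and form_add_right: "s x (y + z) = s x y + s x z"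
  and form_scale_left: "s (scale c x) y = c * s x y"
  and form_scale_right: "s x (scale c y) = c * s x y"
  and form_self [simp]: "s x x = 0"
  using alt_bilinear by (simp_all add: alt_bilinear_def)

lemma form_zero_left [simp]: "s 0 y = 0"
  using form_scale_left[of 0 0 y] by simp

lemma form_zero_right [simp]: "s y 0 = 0"
  using form_scale_right[of y 0 0] by simp

lemma form_diff_right: "s x (y - z) = s x y - s x z"
  using form_add_right[of x "y - z" z] by (simp add: algebra_simps)

lemma form_skew: "s y x = - s x y"
proof -
  have "s (x + y) (x + y) = s x x + s y x + (s x y + s y y)"
    by (simp only: form_add_left form_add_right)
  then have "s y x + s x y = 0" by simp
  then show ?thesis by (simp add: eq_neg_iff_add_eq_0)
qed

lemma form_eq_0_commute: "s y x = 0 \<longleftrightarrow> s x y = 0"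
  by (subst form_skew) simp

lemma form_sum_right: "s x (\<Sum>b\<in>B. g b) = (\<Sum>b\<in>B. s x (g b))"
  by (induction B rule: infinite_finite_induct) (simp_all add: form_add_right)

lemma subspace_orth: "subspace (orth s U)"
  unfolding subspace_def orth_def by (simp add: form_add_right form_scale_right)

lemma subspace_Rad: "subspace U \<Longrightarrow> subspace (Rad s U)"
  unfolding Rad_def using subspace_inter subspace_orth by blast

lemma orth_span [simp]: "orth s (span A) = orth s A"
proof
  show "orth s (span A) \<subseteq> orth s A"
    using span_superset by (auto simp: orth_def)
  show "orth s A \<subseteq> orth s (span A)"
  proof
    fix w assume "w \<in> orth s A"
    then have "span A \<subseteq> {x. s x w = 0}"
      by (intro span_minimal) (auto simp: orth_def subspace_def form_add_left form_scale_left)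
    then show "w \<in> orth s (span A)" by (auto simp: orth_def)
  qed
qed

lemma span_image_eq_sum:
  assumes "finite B" "v \<in> span (h ` B)"
  obtains c where "v = (\<Sum>b\<in>B. scale (c b) (h b))"
proof -
  let ?S = "range (\<lambda>c. \<Sum>b\<in>B. scale (c b) (h b))"
  have "subspace ?S"
    unfolding subspace_def
  proof (intro conjI ballI allI)
    show "0 \<in> ?S" by (rule range_eqI[where x = "\<lambda>_. 0"]) simp
  next
    fix x y assume "x \<in> ?S" "y \<in> ?S"
    then obtain c c' where "x = (\<Sum>b\<in>B. scale (c b) (h b))" "y = (\<Sum>b\<in>B. scale (c' b) (h b))"
      by blast
    then have "x + y = (\<Sum>b\<in>B. scale (c b + c' b) (h b))"
      by (simp add: sum.distrib scale_left_distrib)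
    then show "x + y \<in> ?S" by (rule range_eqI[where x = "\<lambda>b. c b + c' b"])
  next
    fix k x assume "x \<in> ?S"
    then obtain c where "x = (\<Sum>b\<in>B. scale (c b) (h b))" by blast
    then have "scale k x = (\<Sum>b\<in>B. scale (k * c b) (h b))"
      by (simp add: scale_sum_right)
    then show "scale k x \<in> ?S" by (rule range_eqI[where x = "\<lambda>b. k * c b"])
  qed
  moreover have "h b \<in> ?S" if "b \<in> B" for b
  proof -
    have "(\<Sum>a\<in>B. scale (if a = b then 1 else 0) (h a)) = (\<Sum>a\<in>B. if a = b then h a else 0)"
      by (intro sum.cong) auto
    then have "h b = (\<Sum>a\<in>B. scale (if a = b then 1 else 0) (h a))"
      using that assms(1) by simp
    then show ?thesis by (rule range_eqI[where x = "\<lambda>a. if a = b then 1 else 0"])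
  qed
  ultimately have "span (h ` B) \<subseteq> ?S" by (intro span_minimal) auto
  then show ?thesis using assms that by blast
qed

lemma span_insert_eq_subspace:
  assumes "subspace U" "S \<subseteq> U" "x \<in> U" "x \<notin> span S" "dim U = Suc (dim S)"
  shows "span (insert x S) = U"
proof (rule subspace_dim_equal)
  show "span (insert x S) \<subseteq> U" using assms by (intro span_minimal) auto
  show "dim U \<le> dim (span (insert x S))" using assms by (simp add: dim_insert)
qed (use assms in auto)

lemma spanning_family_independent:
  assumes "finite A" "span (h ` A) = UNIV" "card A = dim (UNIV :: 'v set)"
  shows "inj_on h A" "independent (h ` A)"
proof -
  have "card A \<le> card (h ` A)"
    using assms dim_le_card[of UNIV "h ` A"] by simp
  then have "card (h ` A) = card A"
    using card_image_le[OF assms(1), of h] by simp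
  then show "inj_on h A"
    by (rule eq_card_imp_inj_on[OF assms(1)])
  show "independent (h ` A)"
    using assms \<open>card (h ` A) = card A\<close> card_eq_dim[of "h ` A" UNIV] by simp
qed

end

section \<open>Hyperbolic pairs\<close>

definition partner :: "nat \<Rightarrow> nat" where
  "partner a = (if odd a then a + 1 else a - 1)"

lemma partner_partner [simp]: "1 \<le> a \<Longrightarrow> partner (partner a) = a"
  by (auto simp: partner_def)

lemma odd_partner [simp]: "1 \<le> a \<Longrightarrow> odd (partner a) \<longleftrightarrow> even a"
  by (auto simp: partner_def)

lemma partner_mem: "a \<in> {1..2*r} \<Longrightarrow> partner a \<in> {1..2*r}"
  by (auto simp: partner_def) presburger

definition hyperbolic_pairs ::
  "('v \<Rightarrow> 'v \<Rightarrow> 'f::{zero,one}) \<Rightarrow> nat \<Rightarrow> (nat \<Rightarrow> 'v) \<Rightarrow> (nat \<Rightarrow> 'v) \<Rightarrow> bool" where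
  "hyperbolic_pairs s r e f \<longleftrightarrow>
     (\<forall>i\<in>{1..r}. \<forall>j\<in>{1..r}. s (e i) (e j) = 0 \<and> s (f i) (f j) = 0 \<and>
        s (e i) (f j) = (if i = j then 1 else 0))"

lemma hseq_eq: "hseq e f a = (if odd a then e ((a + 1) div 2) else f ((a + 1) div 2))"
  by (simp add: hseq_def)

lemma hseq_split: "hseq (\<lambda>i. h (2 * i - 1)) (\<lambda>i. h (2 * i)) = h"
  by (auto simp: hseq_def fun_eq_iff)

context alternating_form
begin

lemma hyperbolic_pairs_form:
  assumes hp: "hyperbolic_pairs s r e f" and a: "a \<in> {1..2*r}" and b: "b \<in> {1..2*r}"
  shows "s (hseq e f a) (hseq e f b) = (if b = partner a then if odd a then 1 else -1 else 0)"
proof -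
  define i j where "i = (a + 1) div 2" and "j = (b + 1) div 2"
  have ij: "i \<in> {1..r}" "j \<in> {1..r}"
    using a b unfolding i_def j_def by auto
  have "s (f i) (e j) = - s (e j) (f i)" by (rule form_skew)
  then have rel: "s (e i) (e j) = 0" "s (f i) (f j) = 0" "s (e i) (f j) = (if i = j then 1 else 0)"
      "s (f i) (e j) = (if i = j then -1 else 0)"
    using hp ij by (auto simp: hyperbolic_pairs_def)
  have h: "hseq e f a = (if odd a then e i else f i)" "hseq e f b = (if odd b then e j else f j)"
    unfolding hseq_eq i_def j_def by simp_all
  have "b = partner a \<longleftrightarrow> i = j \<and> (odd a \<longleftrightarrow> even b)"
    using a b unfolding i_def j_def partner_def by auto presburger+
  then show ?thesis
    by (cases "odd a"; cases "odd b") (simp_all add: h rel)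
qed

lemma hyperbolic_pairs_coeff:
  assumes hp: "hyperbolic_pairs s r e f" and B: "B \<subseteq> {1..2*r}" and a: "a \<in> B"
  shows "s (hseq e f (partner a)) (\<Sum>b\<in>B. scale (c b) (hseq e f b)) =
    (if odd a then - c a else c a)"
proof -
  have pa: "partner a \<in> {1..2*r}" using partner_mem a B by blast
  have "s (hseq e f (partner a)) (\<Sum>b\<in>B. scale (c b) (hseq e f b))
      = (\<Sum>b\<in>B. c b * s (hseq e f (partner a)) (hseq e f b))"
    by (simp add: form_sum_right form_scale_right)
  also have "\<dots> = (\<Sum>b\<in>B. if b = a then (if odd a then - c b else c b) else 0)"
  proof (intro sum.cong refl)
    fix b assume "b \<in> B"
    with B have "b \<in> {1..2*r}" by blast
    with a B show "c b * s (hseq e f (partner a)) (hseq e f b) =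
        (if b = a then (if odd a then - c b else c b) else 0)"
      by (auto simp: hyperbolic_pairs_form[OF hp pa])
  qed
  also have "\<dots> = (if odd a then - c a else c a)"
    using a finite_subset[OF B] by simp
  finally show ?thesis .
qed

lemma Rad_hyperbolic_span:
  assumes hp: "hyperbolic_pairs s r e f" and l: "l \<le> 2*r"
  shows "Rad s (span (hseq e f ` {1..l})) \<subseteq> (if odd l then span {hseq e f l} else {0})"
proof
  fix v assume v: "v \<in> Rad s (span (hseq e f ` {1..l}))"
  then have "v \<in> span (hseq e f ` {1..l})" by (simp add: Rad_def)
  then obtain c where c: "v = (\<Sum>b\<in>{1..l}. scale (c b) (hseq e f b))"
    using span_image_eq_sum[OF finite_atLeastAtMost] by blast
  have "c a = 0" if a: "a \<in> {1..l}" "a \<noteq> l \<or> even l" for a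
  proof -
    have "partner a \<in> {1..l}"
      using a by (auto simp: partner_def) presburger
    then have "hseq e f (partner a) \<in> span (hseq e f ` {1..l})"
      by (intro span_base imageI)
    then have "s (hseq e f (partner a)) v = 0"
      using v by (auto simp: Rad_def orth_def)
    then show ?thesis
      using hyperbolic_pairs_coeff[OF hp _ a(1), of c] c l by (auto split: if_splits)
  qed
  then have "v = (\<Sum>b\<in>{1..l}. if b = l \<and> odd l then scale (c b) (hseq e f b) else 0)"
    unfolding c by (intro sum.cong) auto
  also have "\<dots> = (if odd l then scale (c l) (hseq e f l) else 0)"
    using odd_pos[of l] by (cases "odd l") auto
  finally show "v \<in> (if odd l then span {hseq e f l} else {0})"
    by (auto intro: span_scale span_base)
qed

lemma hyperbolic_pairs_orth_decomp:
  assumes hp: "hyperbolic_pairs s r e f"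
  obtains u where "u \<in> span (hseq e f ` {1..2*r})" "w - u \<in> orth s (hseq e f ` {1..2*r})"
proof
  let ?h = "hseq e f"
  \<comment> \<open>chosen so that, by \<open>hyperbolic_pairs_coeff\<close>, pairing \<open>u\<close> with \<open>?h (partner a)\<close>
    gives back \<open>s (?h (partner a)) w\<close>\<close>
  define c where "c a = (if odd a then -1 else 1) * s (?h (partner a)) w" for a
  define u where "u = (\<Sum>a\<in>{1..2*r}. scale (c a) (?h a))"
  show "u \<in> span (?h ` {1..2*r})"
    unfolding u_def by (intro span_sum span_scale span_base) auto
  have "s (?h b) u = s (?h b) w" if b: "b \<in> {1..2*r}" for b
  proof -
    have "partner b \<in> {1..2*r}" using partner_mem b by blast
    then have "s (?h (partner (partner b))) u = s (?h (partner (partner b))) w"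
      using hyperbolic_pairs_coeff[OF hp, of "{1..2*r}" "partner b" c] unfolding u_def c_def
      by simp
    then show ?thesis using b by simp
  qed
  then show "w - u \<in> orth s (?h ` {1..2*r})"
    by (auto simp: orth_def form_diff_right)
qed

end

section \<open>Chambers as flags\<close>

lemma chamber_flagI:
  assumes obj: "\<And>i. i \<in> {1..n-1} \<Longrightarrow> gobj scale s i (X i)"
    and flag: "\<And>i j. i \<in> {1..n-1} \<Longrightarrow> j \<in> {1..n-1} \<Longrightarrow> i < j \<Longrightarrow>
      X i \<subseteq> X j \<and> X i \<inter> Rad s (X j) = {0}"
  shows "chamber scale s n (X ` {1..n-1})"
proof -
  have "incident s (X i) (X j)" if "i \<in> {1..n-1}" "j \<in> {1..n-1}" for i j
    using flag[OF that] flag[OF that(2,1)]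
    by (cases i j rule: linorder_cases) (auto simp: incident_def)
  then show ?thesis
    using obj unfolding chamber_def by blast
qed

context alternating_form
begin

lemma incident_dim_eq:
  assumes "subspace X" "subspace Y" "dim X = dim Y" "incident s X Y"
  shows "X = Y"
  using assms subspace_dim_equal[of X Y] subspace_dim_equal[of Y X]
  unfolding incident_def by auto

lemma incident_dim_less:
  assumes "dim X < dim Y" "incident s X Y"
  shows "X \<subseteq> Y \<and> X \<inter> Rad s Y = {0}"
  using assms dim_subset[of Y X] unfolding incident_def by auto

lemma chamber_flagE:
  assumes "chamber scale s n C"
  obtains X where "C = X ` {1..n-1}" "\<And>i. i \<in> {1..n-1} \<Longrightarrow> gobj scale s i (X i)"
    "\<And>i j. i \<in> {1..n-1} \<Longrightarrow> j \<in> {1..n-1} \<Longrightarrow> i < j \<Longrightarrow>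
      X i \<subseteq> X j \<and> X i \<inter> Rad s (X j) = {0}"
proof -
  have typed: "\<And>Z. Z \<in> C \<Longrightarrow> \<exists>i\<in>{1..n-1}. gobj scale s i Z"
    and inc: "\<And>Z W. Z \<in> C \<Longrightarrow> W \<in> C \<Longrightarrow> incident s Z W"
    and "\<forall>i\<in>{1..n-1}. \<exists>Z. Z \<in> C \<and> gobj scale s i Z"
    using assms unfolding chamber_def by auto
  from bchoice[OF this(3)] obtain X where X: "\<forall>i\<in>{1..n-1}. X i \<in> C \<and> gobj scale s i (X i)"
    by blast
  then have XC: "X i \<in> C" and X_sub: "subspace (X i)" and X_dim: "dim (X i) = i"
    if "i \<in> {1..n-1}" for i
    using that by (auto simp: gobj_def)
  have C_sub: "C \<subseteq> X ` {1..n-1}"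
  proof
    fix Z assume Z: "Z \<in> C"
    then obtain i where i: "i \<in> {1..n-1}" "gobj scale s i Z" using typed by blast
    then have "Z = X i"
      using X_sub[OF i(1)] X_dim[OF i(1)] inc[OF Z XC[OF i(1)]]
      by (intro incident_dim_eq) (auto simp: gobj_def)
    then show "Z \<in> X ` {1..n-1}" using i(1) by blast
  qed
  show thesis
  proof (rule that)
    show "C = X ` {1..n-1}" using C_sub XC by blast
    show "gobj scale s i (X i)" if "i \<in> {1..n-1}" for i using X that by blast
    show "X i \<subseteq> X j \<and> X i \<inter> Rad s (X j) = {0}"
      if "i \<in> {1..n-1}" "j \<in> {1..n-1}" "i < j" for i j
      using X_dim[OF that(1)] X_dim[OF that(2)] inc[OF XC[OF that(1)] XC[OF that(2)]] that(3)
      by (intro incident_dim_less) auto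
  qed
qed

section \<open>The flag of a hyperbolic basis is a chamber\<close>

lemma hyperbolic_basis_pairs: "hyperbolic_basis scale s r d e f \<Longrightarrow> hyperbolic_pairs s r e f"
  by (simp add: hyperbolic_basis_def hyperbolic_pairs_def)

lemma hyperbolic_basis_dim:
  assumes "hyperbolic_basis scale s r d e f"
  shows "dim (UNIV :: 'v set) = 2 * r + d"
  using assms dim_subset[of "Rad s UNIV" UNIV] by (auto simp: hyperbolic_basis_def rank_def)

lemma hyperbolic_basis_dim_span:
  assumes hb: "hyperbolic_basis scale s r d e f" and l: "l \<le> 2 * r + d"
  shows "dim (span (hseq e f ` {1..l})) = l"
proof -
  have inj: "inj_on (hseq e f) {1..2*r+d}" and ind: "independent (hseq e f ` {1..2*r+d})"
    using hb unfolding hyperbolic_basis_def by blast+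
  have "inj_on (hseq e f) {1..l}" using l by (intro inj_on_subset[OF inj]) auto
  moreover have "independent (hseq e f ` {1..l})"
    using l by (intro independent_mono[OF ind] image_mono) auto
  ultimately show ?thesis by (simp add: dim_eq_card_independent card_image)
qed

lemma hyperbolic_basis_not_in_span:
  assumes hb: "hyperbolic_basis scale s r d e f" and l: "l \<in> {1..2 * r + d}"
  shows "hseq e f l \<notin> span (hseq e f ` {1..l-1})"
proof
  assume "hseq e f l \<in> span (hseq e f ` {1..l-1})"
  moreover have "{1..l} = insert l {1..l-1}" using l by auto
  ultimately have "dim (span (hseq e f ` {1..l})) = dim (span (hseq e f ` {1..l-1}))"
    by (simp add: dim_insert)
  moreover have "l - 1 \<le> 2 * r + d" using l by auto
  ultimately show False
    using hyperbolic_basis_dim_span[OF hb] l by fastforce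
qed

lemma hyperbolic_basis_chamber:
  assumes hb: "hyperbolic_basis scale s r d e f" and mr: "dim (Rad s UNIV) \<le> 1"
    and n: "dim (UNIV :: 'v set) = n"
  shows "chamber scale s n (hflag scale e f ` {1..n-1})"
proof -
  let ?C = "\<lambda>l. span (hseq e f ` {1..l})"
  have hp: "hyperbolic_pairs s r e f" using hb by (rule hyperbolic_basis_pairs)
  have n_le: "n - 1 \<le> 2 * r" and "n \<le> 2 * r + d"
    using hb mr n hyperbolic_basis_dim[OF hb] by (auto simp: hyperbolic_basis_def)
  have Rad_C: "Rad s (?C l) \<subseteq> span {hseq e f l}" if "l \<le> 2 * r" for l
    using Rad_hyperbolic_span[OF hp that] span_zero by (auto split: if_splits)
  have "gobj scale s l (?C l)" if l: "l \<in> {1..n-1}" for l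
  proof -
    have "?C l \<subseteq> ?C (2 * r)" using l n_le by (intro span_mono image_mono) auto
    then have "?C l \<inter> Rad s UNIV \<subseteq> Rad s (?C (2 * r))"
      by (auto simp: Rad_def orth_def)
    also have "\<dots> \<subseteq> {0}"
      using Rad_hyperbolic_span[OF hp, of "2 * r"] by simp
    finally have "?C l \<inter> Rad s UNIV = {0}"
      using span_zero by (auto simp: Rad_def orth_def)
    moreover have "dim (Rad s (?C l)) \<le> dim (span {hseq e f l})"
      using Rad_C l n_le by (intro dim_subset) auto
    moreover have "dim (span {hseq e f l}) \<le> 1" by simp
    ultimately show ?thesis
      using l n_le hyperbolic_basis_dim_span[OF hb] by (simp add: gobj_def)
  qed
  moreover have "?C k \<subseteq> ?C m \<and> ?C k \<inter> Rad s (?C m) = {0}"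
    if km: "k \<in> {1..n-1}" "m \<in> {1..n-1}" "k < m" for k m
  proof
    show "?C k \<subseteq> ?C m" using km by (intro span_mono) auto
    have "v = 0" if v: "v \<in> ?C k" "v \<in> span {hseq e f m}" for v
    proof -
      obtain t where t: "v = scale t (hseq e f m)" using v(2) by (auto simp: span_singleton)
      have "?C k \<subseteq> ?C (m - 1)" using km(3) by (intro span_mono image_mono) auto
      then have "t \<noteq> 0 \<Longrightarrow> hseq e f m \<in> ?C (m - 1)"
        using v(1) t span_scale[of v _ "inverse t"] by auto
      moreover have "hseq e f m \<notin> ?C (m - 1)"
        using km n_le by (intro hyperbolic_basis_not_in_span[OF hb]) auto
      ultimately show ?thesis using t by auto
    qed
    then show "?C k \<inter> Rad s (?C m) = {0}"
      using Rad_C[of m] n_le km(2) span_zero subspace_0[OF subspace_Rad[OF subspace_span]] by auto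
  qed
  ultimately have "chamber scale s n (?C ` {1..n-1})"
    by (rule chamber_flagI)
  then show ?thesis
    unfolding hflag_def .
qed

end

section \<open>Every chamber comes from a hyperbolic basis\<close>

locale admissible_flag = alternating_form scale Basis s
  for scale :: "'f::field \<Rightarrow> 'v::ab_group_add \<Rightarrow> 'v" and Basis and s +
  fixes n :: nat and Y :: "nat \<Rightarrow> 'v set"
  assumes subspace_Y: "i \<le> n \<Longrightarrow> subspace (Y i)"
    and dim_Y: "i \<le> n \<Longrightarrow> dim (Y i) = i"
    and Y_mono: "i \<le> j \<Longrightarrow> j \<le> n \<Longrightarrow> Y i \<subseteq> Y j"
    and Y_inter_Rad: "i < j \<Longrightarrow> j \<le> n \<Longrightarrow> Y i \<inter> Rad s (Y j) = {0}"
    and Y_top: "Y n = UNIV"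
begin

lemma Y_0: "Y 0 = {0}"
  using dim_Y[of 0] subspace_0[OF subspace_Y[of 0]] by auto

definition adapted :: "nat \<Rightarrow> (nat \<Rightarrow> 'v) \<Rightarrow> bool" where
  "adapted l h \<longleftrightarrow>
     (\<forall>a\<in>{1..l}. odd a \<longrightarrow> h a \<in> Rad s (Y a) \<and> h a \<noteq> 0) \<and>
     (\<forall>a\<in>{1..l}. even a \<longrightarrow> h a \<in> Y a \<inter> orth s (Y (a - 2)) \<and> s (h (a - 1)) (h a) = 1)"

lemma adapted_oddD:
    "adapted l h \<Longrightarrow> a \<in> {1..l} \<Longrightarrow> odd a \<Longrightarrow> h a \<in> Rad s (Y a) \<and> h a \<noteq> 0"
  and adapted_evenD: "adapted l h \<Longrightarrow> a \<in> {1..l} \<Longrightarrow> even a \<Longrightarrow>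
    h a \<in> Y a \<and> h a \<in> orth s (Y (a - 2)) \<and> s (h (a - 1)) (h a) = 1"
  by (auto simp: adapted_def)

lemma adapted_mono: "adapted l h \<Longrightarrow> k \<le> l \<Longrightarrow> adapted k h"
  by (auto simp: adapted_def)

lemma adapted_SucI:
  assumes "adapted l h"
    and "odd (Suc l) \<Longrightarrow> v \<in> Rad s (Y (Suc l)) \<and> v \<noteq> 0"
    and "even (Suc l) \<Longrightarrow> v \<in> Y (Suc l) \<inter> orth s (Y (l - 1)) \<and> s (h l) v = 1"
  shows "adapted (Suc l) (h(Suc l := v))"
  unfolding adapted_def
proof (rule conjI; intro ballI impI)
  fix a assume a: "a \<in> {1..Suc l}" "odd a"
  show "(h(Suc l := v)) a \<in> Rad s (Y a) \<and> (h(Suc l := v)) a \<noteq> 0"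
  proof (cases "a = Suc l")
    case True
    then show ?thesis using assms(2) a by simp
  next
    case False
    then show ?thesis using adapted_oddD[OF assms(1)] a by simp
  qed
next
  fix a assume a: "a \<in> {1..Suc l}" "even a"
  show "(h(Suc l := v)) a \<in> Y a \<inter> orth s (Y (a - 2)) \<and>
    s ((h(Suc l := v)) (a - 1)) ((h(Suc l := v)) a) = 1"
  proof (cases "a = Suc l")
    case True
    then show ?thesis using assms(3) a by simp
  next
    case False
    then show ?thesis using adapted_evenD[OF assms(1)] a by auto
  qed
qed

lemma adapted_mem: "adapted l h \<Longrightarrow> a \<in> {1..l} \<Longrightarrow> h a \<in> Y a"
  using adapted_oddD[of l h a] adapted_evenD[of l h a] by (cases "odd a") (auto simp: Rad_def)

lemma adapted_span:
  assumes "adapted l h" "l \<le> n"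
  shows "span (h ` {1..l}) = Y l"
  using assms
proof (induction l)
  case 0
  then show ?case by (simp add: Y_0)
next
  case (Suc l)
  have IH: "span (h ` {1..l}) = Y l"
    using Suc adapted_mono by auto
  have new: "h (Suc l) \<in> Y (Suc l)" "h (Suc l) \<notin> Y l"
  proof -
    show "h (Suc l) \<in> Y (Suc l)" using adapted_mem[OF Suc.prems(1)] by simp
    show "h (Suc l) \<notin> Y l"
    proof (cases "odd (Suc l)")
      case True
      then have "h (Suc l) \<in> Rad s (Y (Suc l)) - {0}"
        using adapted_oddD[OF Suc.prems(1)] by auto
      then show ?thesis using Y_inter_Rad[of l "Suc l"] Suc.prems(2) by auto
    next
      case False
      then have "s (h l) (h (Suc l)) = 1" "h l \<in> Rad s (Y l)"
        using adapted_evenD[OF Suc.prems(1), of "Suc l"] adapted_oddD[OF Suc.prems(1), of l] odd_pos[of l]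
        by auto
      then show ?thesis by (auto simp: Rad_def orth_def form_eq_0_commute[of _ "h l"])
    qed
  qed
  have "span (insert (h (Suc l)) (h ` {1..l})) = Y (Suc l)"
  proof (rule span_insert_eq_subspace)
    show "subspace (Y (Suc l))" using Suc.prems(2) by (rule subspace_Y)
    show "h ` {1..l} \<subseteq> Y (Suc l)"
      using span_superset[of "h ` {1..l}"] IH Y_mono[of l "Suc l"] Suc.prems(2) by simp
    show "h (Suc l) \<notin> span (h ` {1..l})" using new IH by simp
    show "dim (Y (Suc l)) = Suc (dim (h ` {1..l}))"
      using IH dim_Y Suc.prems(2) dim_span[of "h ` {1..l}"] by simp
    show "h (Suc l) \<in> Y (Suc l)" using new by simp
  qed
  then show ?case by (simp add: atLeastAtMostSuc_conv)
qed

lemma adapted_form_eq_0: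
  assumes h: "adapted l h" "l \<le> n" and ab: "1 \<le> a" "a < b" "b \<le> l" "\<not> (odd a \<and> b = Suc a)"
  shows "s (h a) (h b) = 0"
proof (cases "odd b")
  case True
  have "h b \<in> Rad s (Y b)" using adapted_oddD[OF h(1)] ab True by auto
  moreover have "h a \<in> Y b" using adapted_mem[OF h(1)] Y_mono[of a b] ab h(2) by auto
  ultimately show ?thesis by (auto simp: Rad_def orth_def)
next
  case False
  have "h b \<in> orth s (Y (b - 2))" using adapted_evenD[OF h(1)] ab False by auto
  moreover have "a \<le> b - 2" using ab False by presburger
  then have "Y a \<subseteq> Y (b - 2)" using ab h(2) by (intro Y_mono) auto
  moreover have "h a \<in> Y a" using adapted_mem[OF h(1)] ab by auto
  ultimately show ?thesis by (auto simp: orth_def)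
qed

lemma adapted_hyperbolic_pairs:
  assumes h: "adapted l h" "l \<le> n" and m: "2 * m \<le> l"
  shows "hyperbolic_pairs s m (\<lambda>i. h (2 * i - 1)) (\<lambda>i. h (2 * i))"
proof -
  have orth: "s (h a) (h b) = 0"
    if ab: "a \<in> {1..2*m}" "b \<in> {1..2*m}" "a \<noteq> b"
      "(a + 1) div 2 \<noteq> (b + 1) div 2 \<or> odd a = odd b"
    for a b
  proof -
    have not_pair: "\<not> (odd a \<and> b = Suc a)" "\<not> (odd b \<and> a = Suc b)"
      using ab(4) by presburger+
    show ?thesis
    proof (cases "a < b")
      case True
      then show ?thesis using ab(1,2) m not_pair by (intro adapted_form_eq_0[OF h]) auto
    next
      case False
      then have "s (h b) (h a) = 0"
        using ab(1-3) m not_pair by (intro adapted_form_eq_0[OF h]) auto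
      then show ?thesis by (simp add: form_eq_0_commute)
    qed
  qed
  show ?thesis
    unfolding hyperbolic_pairs_def
  proof (intro ballI)
    fix i j assume ij: "i \<in> {1..m}" "j \<in> {1..m}"
    have "s (h (2 * i - 1)) (h (2 * i)) = 1"
      using adapted_evenD[OF h(1), of "2 * i"] ij m by auto
    moreover have "odd (2 * i - 1)" "odd (2 * j - 1)" "(2 * i - 1 + 1) div 2 = i"
      using ij by auto
    then have "i \<noteq> j \<Longrightarrow> s (h (2 * i - 1)) (h (2 * j - 1)) = 0"
      "i \<noteq> j \<Longrightarrow> s (h (2 * i)) (h (2 * j)) = 0"
      "i \<noteq> j \<Longrightarrow> s (h (2 * i - 1)) (h (2 * j)) = 0"
      using ij m by (intro orth; auto)+
    ultimately show "s (h (2 * i - 1)) (h (2 * j - 1)) = 0 \<and> s (h (2 * i)) (h (2 * j)) = 0 \<and>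
      s (h (2 * i - 1)) (h (2 * j)) = (if i = j then 1 else 0)"
      by (cases "i = j") auto
  qed
qed

lemma adapted_orth_decomp:
  assumes h: "adapted (2 * m) h" "2 * m \<le> n"
  obtains u where "u \<in> Y (2 * m)" "w - u \<in> orth s (Y (2 * m))"
proof -
  have "hyperbolic_pairs s m (\<lambda>i. h (2 * i - 1)) (\<lambda>i. h (2 * i))"
    using adapted_hyperbolic_pairs[OF h order_refl] .
  from hyperbolic_pairs_orth_decomp[OF this, of w]
  obtain u where u: "u \<in> span (h ` {1..2*m})" "w - u \<in> orth s (h ` {1..2*m})"
    by (simp only: hseq_split) blast
  have span_eq: "span (h ` {1..2*m}) = Y (2 * m)"
    using adapted_span[OF h] .
  have "orth s (h ` {1..2*m}) = orth s (span (h ` {1..2*m}))"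
    by (rule orth_span[symmetric])
  also have "\<dots> = orth s (Y (2 * m))"
    by (simp only: span_eq)
  finally show thesis
    using that u span_eq by simp
qed

lemma obtain_radical_vector:
  assumes h: "adapted (2 * m) h" and m: "2 * m < n"
  obtains v where "v \<in> Rad s (Y (Suc (2 * m)))" "v \<noteq> 0"
proof -
  let ?l = "2 * m"
  have sub: "subspace (Y ?l)" "subspace (Y (Suc ?l))" "Y ?l \<subseteq> Y (Suc ?l)"
    using m by (simp_all add: subspace_Y Y_mono)
  have dims: "dim (Y (Suc ?l)) = Suc (dim (Y ?l))"
    using m dim_Y by simp
  then obtain w where w: "w \<in> Y (Suc ?l)" "w \<notin> Y ?l"
    using dim_subset[of "Y (Suc ?l)" "Y ?l"] by auto
  have "?l \<le> n" using m by simp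
  with h obtain u where u: "u \<in> Y ?l" "w - u \<in> orth s (Y ?l)"
    by (rule adapted_orth_decomp)
  define v where "v = w - u"
  have v: "v \<in> Y (Suc ?l)" "v \<notin> Y ?l"
    using w u sub subspace_diff[of "Y (Suc ?l)" w u] subspace_add[of "Y ?l" v u]
    unfolding v_def by auto
  have "v \<notin> span (Y ?l)"
    using v(2) sub(1) span_eq_iff by blast
  then have "span (insert v (Y ?l)) = Y (Suc ?l)"
    by (intro span_insert_eq_subspace) (use sub v dims in auto)
  moreover have "v \<in> orth s (insert v (Y ?l))"
    using u unfolding v_def orth_def by simp
  ultimately have "v \<in> orth s (Y (Suc ?l))"
    using orth_span[of "insert v (Y ?l)"] by simp
  then show thesis
    using that v subspace_0[OF sub(1)] by (auto simp: Rad_def)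
qed

lemma obtain_partner_vector:
  assumes h: "adapted (Suc (2 * m)) h" and m: "Suc (Suc (2 * m)) \<le> n"
  obtains v where "v \<in> Y (Suc (Suc (2 * m)))" "v \<in> orth s (Y (2 * m))" "s (h (Suc (2 * m))) v = 1"
proof -
  let ?l = "2 * m" and ?e = "h (Suc (2 * m))"
  have e: "?e \<in> Rad s (Y (Suc ?l))" "?e \<noteq> 0"
    using adapted_oddD[OF h, of "Suc ?l"] by auto
  have mono: "Y ?l \<subseteq> Y (Suc ?l)" "Y (Suc ?l) \<subseteq> Y (Suc (Suc ?l))"
    using m by (simp_all add: Y_mono)
  have "?e \<notin> Rad s (Y (Suc (Suc ?l)))"
    using e Y_inter_Rad[of "Suc ?l" "Suc (Suc ?l)"] m by (auto simp: Rad_def)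
  then obtain x where x: "x \<in> Y (Suc (Suc ?l))" "s ?e x \<noteq> 0"
    using e mono by (auto simp: Rad_def orth_def form_eq_0_commute[of ?e])
  have "adapted ?l h" "?l \<le> n" using adapted_mono[OF h] m by auto
  then obtain u where u: "u \<in> Y ?l" "x - u \<in> orth s (Y ?l)"
    by (rule adapted_orth_decomp)
  have "s ?e u = 0"
    using e u mono by (auto simp: Rad_def orth_def form_eq_0_commute[of ?e])
  define v where "v = scale (inverse (s ?e x)) (x - u)"
  show thesis
  proof
    show "v \<in> Y (Suc (Suc ?l))"
      unfolding v_def using x u mono m
      by (intro subspace_scale subspace_diff subspace_Y) auto
    show "v \<in> orth s (Y ?l)"
      unfolding v_def using u by (intro subspace_scale subspace_orth)
    show "s ?e v = 1"
      unfolding v_def using x \<open>s ?e u = 0\<close> by (simp add: form_scale_right form_diff_right)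
  qed
qed

lemma ex_adapted: "l \<le> n \<Longrightarrow> \<exists>h. adapted l h"
proof (induction l)
  case 0
  then show ?case by (simp add: adapted_def)
next
  case (Suc l)
  then obtain h where h: "adapted l h" by auto
  show ?case
  proof (cases "even l")
    case True
    then obtain m where l: "l = 2 * m" by blast
    have "adapted (2 * m) h" "2 * m < n" using h Suc.prems l by auto
    then obtain v where "v \<in> Rad s (Y (Suc (2 * m)))" "v \<noteq> 0"
      by (rule obtain_radical_vector)
    with l have "adapted (Suc l) (h(Suc l := v))"
      by (intro adapted_SucI[OF h]) simp_all
    then show ?thesis by blast
  next
    case False
    then have "l = Suc (2 * (l div 2))" by presburger
    then obtain m where l: "l = Suc (2 * m)" by blast
    have "adapted (Suc (2 * m)) h" "Suc (Suc (2 * m)) \<le> n" using h Suc.prems l by auto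
    then obtain v where "v \<in> Y (Suc (Suc (2 * m)))" "v \<in> orth s (Y (2 * m))"
      "s (h (Suc (2 * m))) v = 1"
      by (rule obtain_partner_vector)
    with l have "adapted (Suc l) (h(Suc l := v))"
      by (intro adapted_SucI[OF h]) simp_all
    then show ?thesis by blast
  qed
qed

lemma adapted_hyperbolic_basis:
  assumes h: "adapted n h" and mr: "dim (Rad s UNIV) \<le> 1"
  shows "hyperbolic_basis scale s (n div 2) (n mod 2) (\<lambda>i. h (2 * i - 1)) (\<lambda>i. h (2 * i))"
proof -
  define r d where "r = n div 2" and "d = n mod 2"
  let ?e = "\<lambda>i. h (2 * i - 1)"
  have n: "2 * r + d = n" unfolding r_def d_def by simp
  have span_UNIV: "span (h ` {1..n}) = UNIV"
    using adapted_span[OF h order_refl] Y_top by simp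
  have dim_UNIV: "dim (UNIV :: 'v set) = n"
    using dim_Y[of n] Y_top by simp
  have basis: "inj_on h {1..n}" "independent (h ` {1..n})"
    using spanning_family_independent[OF _ span_UNIV] dim_UNIV by simp_all
  have hp: "hyperbolic_pairs s r ?e (\<lambda>i. h (2 * i))"
    using n by (intro adapted_hyperbolic_pairs[OF h order_refl]) auto
  have Rad: "dim (Rad s UNIV) = d \<and> independent (?e ` {r+1..r+d}) \<and> span (?e ` {r+1..r+d}) = Rad s UNIV"
  proof (cases "odd n")
    case True
    then have d: "d = 1" unfolding d_def by (simp add: odd_iff_mod_2_eq_one)
    then have e: "?e ` {r+1..r+d} = {h n}"
      using n by simp
    have hn: "h n \<in> Rad s UNIV" "h n \<noteq> 0"
      using adapted_oddD[OF h, of n] True Y_top odd_pos[of n] by auto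
    then have "dim {h n} \<le> dim (Rad s UNIV)" by (intro dim_subset) auto
    then have dim1: "dim (Rad s UNIV) = 1" using mr hn by simp
    have "span {h n} = Rad s UNIV"
      using hn dim1 by (intro span_insert_eq_subspace[of _ "{}", simplified] subspace_Rad) auto
    then show ?thesis using d e dim1 hn by simp
  next
    case False
    then have d: "d = 0" and "2 * r = n"
      using n unfolding d_def by auto
    then have "Rad s UNIV \<subseteq> {0}"
      using Rad_hyperbolic_span[OF hp order_refl, unfolded hseq_split] span_UNIV False by simp
    then have "Rad s UNIV = {0}"
      using subspace_0[OF subspace_Rad[OF subspace_UNIV]] by auto
    then show ?thesis using d by (simp add: independent_empty)
  qed
  have "rank scale s UNIV = 2 * r"
    using Rad dim_UNIV n by (simp add: rank_def)
  then show ?thesis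
    using hp basis span_UNIV Rad n
    unfolding hyperbolic_basis_def hseq_split hyperbolic_pairs_def r_def d_def by simp
qed

end

context alternating_form
begin

lemma chamber_hyperbolic_basis:
  assumes mr: "dim (Rad s UNIV) \<le> 1" and n: "dim (UNIV :: 'v set) = n"
    and C: "chamber scale s n C"
  shows "\<exists>r d e f. hyperbolic_basis scale s r d e f \<and> C = hflag scale e f ` {1..n-1}"
proof -
  obtain X where C_eq: "C = X ` {1..n-1}"
    and obj: "\<And>i. i \<in> {1..n-1} \<Longrightarrow> gobj scale s i (X i)"
    and flag: "\<And>i j. i \<in> {1..n-1} \<Longrightarrow> j \<in> {1..n-1} \<Longrightarrow> i < j \<Longrightarrow>
      X i \<subseteq> X j \<and> X i \<inter> Rad s (X j) = {0}"
    using chamber_flagE[OF C] by blast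
  \<comment> \<open>testing \<open>l = n\<close> first makes \<open>Y 0 = UNIV\<close> when \<open>n = 0\<close>\<close>
  define Y where "Y l = (if l = n then UNIV else if l = 0 then {0} else X l)" for l
  have X: "subspace (X i)" "dim (X i) = i" "X i \<inter> Rad s UNIV = {0}" if "i \<in> {1..n-1}" for i
    using obj[OF that] by (auto simp: gobj_def)
  have zero_Rad: "0 \<in> Rad s U" if "subspace U" for U
    using subspace_0[OF subspace_Rad[OF that]] .
  interpret admissible_flag scale Basis s n Y
  proof
    fix i assume "i \<le> n"
    then show "subspace (Y i)" "dim (Y i) = i"
      using X[of i] n by (auto simp: Y_def)
  next
    fix i j assume ij: "i \<le> j" "j \<le> n"
    show "Y i \<subseteq> Y j"
      using ij flag[of i j] X(1)[of j] subspace_0 by (cases "i = j") (auto simp: Y_def)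
  next
    fix i j assume ij: "i < j" "j \<le> n"
    show "Y i \<inter> Rad s (Y j) = {0}"
      using ij flag[of i j] X[of i] X(1)[of j] zero_Rad by (auto simp: Y_def)
  qed (simp add: Y_def)
  obtain h where h: "adapted n h" using ex_adapted by blast
  have "hflag scale (\<lambda>i. h (2 * i - 1)) (\<lambda>i. h (2 * i)) l = X l" if l: "l \<in> {1..n-1}" for l
  proof -
    have "hflag scale (\<lambda>i. h (2 * i - 1)) (\<lambda>i. h (2 * i)) l = span (h ` {1..l})"
      by (simp only: hflag_def hseq_split)
    also have "\<dots> = Y l" using l by (intro adapted_span adapted_mono[OF h]) auto
    finally show ?thesis using l by (auto simp: Y_def)
  qed
  then have "C = hflag scale (\<lambda>i. h (2 * i - 1)) (\<lambda>i. h (2 * i)) ` {1..n-1}"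
    unfolding C_eq by (intro image_cong) auto
  then show ?thesis
    using adapted_hyperbolic_basis[OF h mr] by blast
qed

end

theorem corollary3p1:
  fixes scale :: "'f::field \<Rightarrow> 'v::ab_group_add \<Rightarrow> 'v"
    and s :: "'v \<Rightarrow> 'v \<Rightarrow> 'f" and n :: nat
  assumes "vector_space scale"
    and "\<exists>B. finite B \<and> module.span scale B = UNIV"
    and "vector_space.dim scale (UNIV :: 'v set) = n"
    and "alt_bilinear scale s"
    and "max_rank scale s"
  shows "(\<forall>r d e f. hyperbolic_basis scale s r d e f \<longrightarrow>
            chamber scale s n {hflag scale e f l | l. l \<in> {1..n-1}}) \<and>
         (\<forall>C. chamber scale s n C \<longrightarrow>
            (\<exists>r d e f. hyperbolic_basis scale s r d e f \<and>
               C = {hflag scale e f l | l. l \<in> {1..n-1}}))"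
proof -
  interpret vector_space scale by fact
  obtain S where S: "finite S" "span S = UNIV" using assms(2) by blast
  obtain B where B: "independent B" "UNIV \<subseteq> span B"
    using basis_exists[of UNIV] by blast
  interpret alternating_form scale B s
  proof
    show "finite B" using independent_span_bound[OF S(1) B(1)] S(2) by simp
  qed (use B assms(4) in auto)
  have mr: "dim (Rad s UNIV) \<le> 1" using assms(5) by (simp add: max_rank_def)
  show ?thesis
    unfolding setcompr_eq_image Collect_mem_eq
    using hyperbolic_basis_chamber[OF _ mr assms(3)] chamber_hyperbolic_basis[OF mr assms(3)]
    by blast
qed

end
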